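(* As an abelian group, $H=F[1/t]$ is free.
   Context: $F\subseteq\mathbb{Q}[t]$ is the ring of numerical polynomials (polynomials $f$ with $f(n)\in\mathbb{Z}$ for all integers $n\gg0$), and $H=F[1/t]$ is its localization at $t$, viewed as a subring of $\mathbb{Q}[t,1/t]$. *)

theory Defs
  imports "HOL-Computational_Algebra.Computational_Algebra" "HOL-Computational_Algebra.Polynomial_FPS"
begin

definition numerical_polys :: "rat poly set" where
  "numerical_polys = {f. \<exists>N::int. \<forall>n::int. n \<ge> N \<longrightarrow> poly f (of_int n) \<in> \<int>}"

definition laurent_of_poly :: "rat poly \<Rightarrow> rat fls" where
  "laurent_of_poly p = fps_to_fls (fps_of_poly p)"

text \<open>H = F[1/t] as a subring of Q[t,1/t]: elements f * t^(-k) with f in F.\<close>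
definition H_ring :: "rat fls set" where
  "H_ring = {laurent_of_poly f * fls_X_inv ^ k | f k. f \<in> numerical_polys}"

definition zspan :: "'a::comm_ring_1 set \<Rightarrow> 'a set" where
  "zspan B = {\<Sum>b\<in>S. of_int (c b) * b | S c. finite S \<and> S \<subseteq> B}"

definition zindependent :: "'a::comm_ring_1 set \<Rightarrow> bool" where
  "zindependent B \<longleftrightarrow> (\<forall>S c. finite S \<and> S \<subseteq> B \<and> (\<Sum>b\<in>S. of_int (c b) * b) = 0 \<longrightarrow> (\<forall>b\<in>S. c b = (0::int)))"

definition free_abelian :: "'a::comm_ring_1 set \<Rightarrow> bool" where
  "free_abelian A \<longleftrightarrow> (\<exists>B. B \<subseteq> A \<and> zindependent B \<and> zspan B = A)"

end

theory Submission
  imports Defs "HOL-Library.Nat_Bijection"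
begin

(* An element of H is a Laurent polynomial, so it is determined by its coefficients. Enumerate
   the exponents as j_0, j_1, ... and let H_n consist of the elements supported on {j_0, ..., j_n}.
   The coefficient at j_n maps H_n into Q with kernel H_(n-1); its image has bounded denominators,
   hence is cyclic, and lifting generators of these images gives a triangular Z-basis of H.

   Bounded denominators: write h = f / t^k with f integer valued at large integers and h supported
   on a finite set J. For s large, the values h(b^(s+i)) lie in Z[1/b] whatever k is, and the
   combination of them given by the coefficients of prod_(r in J - {e}) (X - b^r) is the coefficient
   of h at e times a nonzero constant. Doing this for b = 2 and b = 3 bounds the denominator. *)

section \<open>Integer spans\<close>

lemma zspan_zero: "0 \<in> zspan B"
  unfolding zspan_def by (intro CollectI exI[of _ "{}"]) auto

lemma zspan_base: "b \<in> B \<Longrightarrow> b \<in> zspan B"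
  unfolding zspan_def by (intro CollectI exI[of _ "{b}"] exI[of _ "\<lambda>_. 1"]) auto

lemma zspan_add_scale:
  assumes "x \<in> zspan B" "y \<in> zspan B"
  shows "x + of_int m * y \<in> zspan B"
proof -
  obtain S1 c1 where S1: "finite S1" "S1 \<subseteq> B" and x: "x = (\<Sum>b\<in>S1. of_int (c1 b) * b)"
    using assms(1) unfolding zspan_def by blast
  obtain S2 c2 where S2: "finite S2" "S2 \<subseteq> B" and y: "y = (\<Sum>b\<in>S2. of_int (c2 b) * b)"
    using assms(2) unfolding zspan_def by blast
  define c where "c b = (if b \<in> S1 then c1 b else 0) + m * (if b \<in> S2 then c2 b else 0)" for b
  have x': "x = (\<Sum>b\<in>S1 \<union> S2. of_int (if b \<in> S1 then c1 b else 0) * b)"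
    unfolding x by (rule sum.mono_neutral_cong_left) (use S1 S2 in auto)
  have y': "y = (\<Sum>b\<in>S1 \<union> S2. of_int (if b \<in> S2 then c2 b else 0) * b)"
    unfolding y by (rule sum.mono_neutral_cong_left) (use S1 S2 in auto)
  have "x + of_int m * y = (\<Sum>b\<in>S1 \<union> S2. of_int (c b) * b)"
    unfolding x' y' c_def by (simp add: sum.distrib sum_distrib_left algebra_simps)
  then show ?thesis unfolding zspan_def using S1 S2 by blast
qed

lemma zspan_minimal:
  assumes zero: "0 \<in> A" and diff: "\<And>x y m. x \<in> A \<Longrightarrow> y \<in> A \<Longrightarrow> x - of_int m * y \<in> A"
    and "B \<subseteq> A"
  shows "zspan B \<subseteq> (A :: 'a::comm_ring_1 set)"
proof
  fix x assume "x \<in> zspan B"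
  then obtain S c where S: "finite S" "S \<subseteq> B" and x: "x = (\<Sum>b\<in>S. of_int (c b) * b)"
    unfolding zspan_def by blast
  from S have "(\<Sum>b\<in>S. of_int (c b) * b) \<in> A"
  proof (induction S rule: finite_induct)
    case (insert b S)
    then have "(\<Sum>b\<in>S. of_int (c b) * b) - of_int (- c b) * b \<in> A"
      using \<open>B \<subseteq> A\<close> by (intro diff) auto
    then show ?case using insert by (simp add: add.commute)
  qed (simp add: zero)
  then show "x \<in> A" using x by simp
qed

section \<open>Groups with triangular rational coordinates\<close>

lemma int_subgroup_eq_multiples:
  fixes I :: "int set"
  assumes zero: "0 \<in> I" and diff: "\<And>i j m. i \<in> I \<Longrightarrow> j \<in> I \<Longrightarrow> i - m * j \<in> I"
  shows "\<exists>d. I = range (\<lambda>m. m * d)"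
proof (cases "I \<subseteq> {0}")
  case True
  then show ?thesis using zero by (intro exI[of _ 0]) auto
next
  case False
  then obtain i where i: "i \<in> I" "i \<noteq> 0" by auto
  have "\<bar>i\<bar> \<in> I" using i diff[OF zero i(1), of 1] by (cases "i < 0") auto
  then have ex: "\<exists>k. 0 < k \<and> int k \<in> I" using i(2) by (intro exI[of _ "nat \<bar>i\<bar>"]) auto
  define d where "d = int (LEAST k. 0 < k \<and> int k \<in> I)"
  have d: "0 < d" "d \<in> I" using LeastI_ex[OF ex] by (auto simp: d_def)
  have d_least: "d \<le> int k" if "0 < k" "int k \<in> I" for k
    using Least_le[of "\<lambda>k. 0 < k \<and> int k \<in> I" k] that by (simp add: d_def)
  have "d dvd j" if "j \<in> I" for j
  proof -
    have "j mod d \<in> I" using diff[OF that d(2), of "j div d"] by (simp add: minus_div_mult_eq_mod)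
    moreover have "j mod d < d" "0 \<le> j mod d" using d(1) by simp_all
    ultimately have "j mod d = 0" using d_least[of "nat (j mod d)"] by fastforce
    then show ?thesis by (simp add: dvd_eq_mod_eq_0)
  qed
  moreover have "m * d \<in> I" for m using diff[OF zero d(2), of "- m"] by simp
  ultimately show ?thesis by (intro exI[of _ d]) (fastforce simp: mult.commute elim!: dvdE)
qed

lemma rat_subgroup_bounded_denominator_cyclic:
  fixes C :: "rat set"
  assumes zero: "0 \<in> C" and diff: "\<And>x y m. x \<in> C \<Longrightarrow> y \<in> C \<Longrightarrow> x - of_int m * y \<in> C"
    and D: "D \<noteq> 0" "\<And>x. x \<in> C \<Longrightarrow> of_int D * x \<in> \<int>"
  shows "\<exists>g. C = range (\<lambda>m. of_int m * g)"
proof -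
  define I where "I = {i. of_int i / of_int D \<in> C}"
  have "C = (\<lambda>i. of_int i / of_int D) ` I"
  proof (intro set_eqI iffI)
    fix x assume "x \<in> C"
    then obtain i where "of_int D * x = of_int i" using D(2) Ints_cases by metis
    then have "x = of_int i / of_int D" using D(1) by (simp add: field_simps)
    then show "x \<in> (\<lambda>i. of_int i / of_int D) ` I"
      using \<open>x \<in> C\<close> by (auto simp: I_def)
  qed (auto simp: I_def)
  moreover have "0 \<in> I" using zero by (simp add: I_def)
  moreover have "i - m * j \<in> I" if "i \<in> I" "j \<in> I" for i j m
    using diff[OF that[unfolded I_def, simplified], of m] by (simp add: I_def diff_divide_distrib)
  ultimately obtain d where "C = (\<lambda>i. of_int i / of_int D) ` range (\<lambda>m. m * d)"
    using int_subgroup_eq_multiples[of I] by blast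
  then show ?thesis by (intro exI[of _ "of_int d / of_int D"]) (auto simp: image_image)
qed

locale triangular_coordinates =
  fixes H :: "'a::comm_ring_1 set" and \<phi> :: "nat \<Rightarrow> 'a \<Rightarrow> rat"
  assumes zero_mem: "0 \<in> H"
    and diff_scale_mem: "\<And>x y m. x \<in> H \<Longrightarrow> y \<in> H \<Longrightarrow> x - of_int m * y \<in> H"
    and coord_add: "\<And>n x y. \<phi> n (x + y) = \<phi> n x + \<phi> n y"
    and coord_of_int_mult: "\<And>n m x. \<phi> n (of_int m * x) = of_int m * \<phi> n x"
    and coord_eventually_zero: "\<And>h. h \<in> H \<Longrightarrow> \<exists>n. \<forall>m>n. \<phi> m h = 0"
    and coord_eq_zero: "\<And>h. h \<in> H \<Longrightarrow> \<forall>m. \<phi> m h = 0 \<Longrightarrow> h = 0"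
    and bounded_denominator:
      "\<And>n. \<exists>D. D \<noteq> 0 \<and> (\<forall>h\<in>H. (\<forall>m>n. \<phi> m h = 0) \<longrightarrow> of_int D * \<phi> n h \<in> \<int>)"
begin

lemma coord_zero: "\<phi> n 0 = 0"
  using coord_add[of n 0 0] by simp

lemma coord_diff_scale: "\<phi> n (x - of_int m * y) = \<phi> n x - of_int m * \<phi> n y"
  using coord_add[of n x "of_int (- m) * y"] coord_of_int_mult[of n "- m" y] by simp

lemma coord_sum: "\<phi> n (\<Sum>b\<in>S. of_int (c b) * f b) = (\<Sum>b\<in>S. of_int (c b) * \<phi> n (f b))"
  by (induction S rule: infinite_finite_induct) (auto simp: coord_zero coord_add coord_of_int_mult)

definition layer :: "nat \<Rightarrow> 'a set" where
  "layer n = {h \<in> H. \<forall>m>n. \<phi> m h = 0}"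

lemma layer_diff_scale: "x \<in> layer n \<Longrightarrow> y \<in> layer n \<Longrightarrow> x - of_int m * y \<in> layer n"
  by (simp add: layer_def diff_scale_mem coord_diff_scale)

lemma layer_Suc_kernel: "h \<in> layer (Suc n) \<Longrightarrow> \<phi> (Suc n) h = 0 \<Longrightarrow> h \<in> layer n"
  using Suc_lessI by (fastforce simp: layer_def)

lemma layer_0_kernel: "h \<in> layer 0 \<Longrightarrow> \<phi> 0 h = 0 \<Longrightarrow> h = 0"
  by (rule coord_eq_zero) (auto simp: layer_def, metis neq0_conv)

lemma coord_image_layer_cyclic: "\<exists>g. \<phi> n ` layer n = range (\<lambda>m. of_int m * g)"
proof -
  obtain D where "D \<noteq> 0" and D: "\<forall>h\<in>layer n. of_int D * \<phi> n h \<in> \<int>"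
    using bounded_denominator[of n] by (auto simp: layer_def)
  show ?thesis
  proof (rule rat_subgroup_bounded_denominator_cyclic[OF _ _ \<open>D \<noteq> 0\<close>])
    show "0 \<in> \<phi> n ` layer n"
      using zero_mem by (auto simp: layer_def coord_zero image_iff intro!: bexI[of _ 0])
    show "x - of_int m * y \<in> \<phi> n ` layer n" if "x \<in> \<phi> n ` layer n" "y \<in> \<phi> n ` layer n" for x y m
    proof -
      from that obtain x' y' where "x' \<in> layer n" "y' \<in> layer n" "x = \<phi> n x'" "y = \<phi> n y'"
        by blast
      then show ?thesis using layer_diff_scale by (auto simp: coord_diff_scale[symmetric])
    qed
  qed (use D in auto)
qed

definition pivot :: "nat \<Rightarrow> rat" where
  "pivot n = (SOME g. \<phi> n ` layer n = range (\<lambda>m. of_int m * g))"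

lemma coord_image_layer: "\<phi> n ` layer n = range (\<lambda>m. of_int m * pivot n)"
  unfolding pivot_def by (rule someI_ex[OF coord_image_layer_cyclic])

definition lift :: "nat \<Rightarrow> 'a" where
  "lift n = (SOME h. h \<in> layer n \<and> \<phi> n h = pivot n)"

lemma lift_in_layer: "lift n \<in> layer n" and coord_lift: "\<phi> n (lift n) = pivot n"
proof -
  have "pivot n \<in> \<phi> n ` layer n"
    unfolding coord_image_layer by (auto intro: range_eqI[of _ _ 1])
  then have "\<exists>h. h \<in> layer n \<and> \<phi> n h = pivot n" by auto
  from someI_ex[OF this] show "lift n \<in> layer n" "\<phi> n (lift n) = pivot n"
    unfolding lift_def by auto
qed

lemma coord_lift_above: "n < m \<Longrightarrow> \<phi> m (lift n) = 0"
  using lift_in_layer by (simp add: layer_def)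

definition basis :: "'a set" where
  "basis = lift ` {n. pivot n \<noteq> 0}"

lemma basis_subset: "basis \<subseteq> H"
  using lift_in_layer by (auto simp: basis_def layer_def)

lemma layer_subset_zspan_if_kernel:
  assumes kernel: "\<And>h. h \<in> layer n \<Longrightarrow> \<phi> n h = 0 \<Longrightarrow> h \<in> zspan basis"
  shows "layer n \<subseteq> zspan basis"
proof
  fix h assume h: "h \<in> layer n"
  then obtain q where q: "\<phi> n h = of_int q * pivot n"
    using coord_image_layer by blast
  show "h \<in> zspan basis"
  proof (cases "pivot n = 0")
    case True
    then show ?thesis using kernel[OF h] q by simp
  next
    case False
    have "h - of_int q * lift n \<in> zspan basis"
      using q lift_in_layer coord_lift by (intro kernel layer_diff_scale h) (simp_all add: coord_diff_scale)
    moreover have "lift n \<in> zspan basis"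
      using False by (intro zspan_base) (simp add: basis_def)
    ultimately have "(h - of_int q * lift n) + of_int q * lift n \<in> zspan basis"
      by (rule zspan_add_scale)
    then show ?thesis by simp
  qed
qed

lemma layer_subset_zspan: "layer n \<subseteq> zspan basis"
proof (induction n)
  case 0
  show ?case by (rule layer_subset_zspan_if_kernel) (metis layer_0_kernel zspan_zero)
next
  case (Suc n)
  show ?case by (rule layer_subset_zspan_if_kernel) (use Suc layer_Suc_kernel in blast)
qed

lemma zspan_basis: "zspan basis = H"
proof
  show "zspan basis \<subseteq> H"
    using zero_mem diff_scale_mem basis_subset by (rule zspan_minimal)
  show "H \<subseteq> zspan basis"
  proof
    fix h assume "h \<in> H"
    then obtain n where "\<forall>m>n. \<phi> m h = 0" using coord_eventually_zero by blast
    then show "h \<in> zspan basis" using \<open>h \<in> H\<close> layer_subset_zspan by (auto simp: layer_def)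
  qed
qed

lemma inj_on_lift: "inj_on lift {n. pivot n \<noteq> 0}"
proof (rule inj_onI)
  have ne: "lift m \<noteq> lift n" if "m < n" "pivot n \<noteq> 0" for m n
    using coord_lift_above[OF that(1)] coord_lift[of n] that(2) by metis
  show "m = n" if "m \<in> {n. pivot n \<noteq> 0}" "n \<in> {n. pivot n \<noteq> 0}" "lift m = lift n" for m n
    using that ne[of m n] ne[of n m] by (cases m n rule: linorder_cases) auto
qed

lemma lift_combination_eq_zero:
  assumes "finite T" "T \<subseteq> {n. pivot n \<noteq> 0}" "(\<Sum>n\<in>T. of_int (c n) * lift n) = 0"
  shows "\<forall>n\<in>T. c n = 0"
  using assms
proof (induction T rule: finite_linorder_max_induct)
  case (insert b T)
  have "b \<notin> T" using insert.hyps(2) by blast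
  have "(\<Sum>n\<in>T. of_int (c n) * \<phi> b (lift n)) = 0"
    using insert.hyps(2) coord_lift_above by simp
  then have "\<phi> b (\<Sum>n\<in>insert b T. of_int (c n) * lift n) = of_int (c b) * pivot b"
    using insert.hyps(1) \<open>b \<notin> T\<close> by (simp only: coord_sum) (simp add: coord_lift)
  then have "c b = 0" using insert.prems by (simp add: coord_zero)
  then show ?case using insert \<open>b \<notin> T\<close> by simp
qed simp

lemma zindependent_basis: "zindependent basis"
  unfolding zindependent_def
proof (intro allI impI)
  fix S c assume S: "finite S \<and> S \<subseteq> basis \<and> (\<Sum>b\<in>S. of_int (c b) * b) = 0"
  define T where "T = {n. pivot n \<noteq> 0 \<and> lift n \<in> S}"
  have inj: "inj_on lift T" using inj_on_lift by (rule inj_on_subset) (auto simp: T_def)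
  have ST: "S = lift ` T" using S unfolding T_def basis_def by blast
  then have "finite T" using S inj finite_image_iff by blast
  moreover have "(\<Sum>n\<in>T. of_int (c (lift n)) * lift n) = 0"
    using S unfolding ST sum.reindex[OF inj] by simp
  moreover have "T \<subseteq> {n. pivot n \<noteq> 0}" by (auto simp: T_def)
  ultimately have "\<forall>n\<in>T. c (lift n) = 0"
    using lift_combination_eq_zero[of T "c \<circ> lift"] by simp
  then show "\<forall>b\<in>S. c b = 0" unfolding ST by blast
qed

theorem free_abelian: "free_abelian H"
  unfolding free_abelian_def using basis_subset zindependent_basis zspan_basis by blast

end

section \<open>The ring \<open>F[1/t]\<close>\<close>

lemma numerical_polys_iff_eventually:
  "f \<in> numerical_polys \<longleftrightarrow> (\<forall>\<^sub>F n in at_top. poly f (of_int n) \<in> \<int>)"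
  by (simp add: numerical_polys_def eventually_at_top_linorder)

lemma numerical_polys_diff: "p \<in> numerical_polys \<Longrightarrow> q \<in> numerical_polys \<Longrightarrow> p - q \<in> numerical_polys"
  unfolding numerical_polys_iff_eventually by (auto elim: eventually_elim2)

lemma numerical_polys_mult: "p \<in> numerical_polys \<Longrightarrow> q \<in> numerical_polys \<Longrightarrow> p * q \<in> numerical_polys"
  unfolding numerical_polys_iff_eventually by (auto elim: eventually_elim2)

lemma numerical_polys_of_int: "[:of_int m:] \<in> numerical_polys"
  by (simp add: numerical_polys_iff_eventually)

lemma numerical_polys_monom: "monom 1 k \<in> numerical_polys"
  by (simp add: numerical_polys_iff_eventually poly_monom)

lemma laurent_of_poly_diff: "laurent_of_poly (p - q) = laurent_of_poly p - laurent_of_poly q"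
  by (simp add: laurent_of_poly_def fps_of_poly_diff)

lemma laurent_of_poly_mult: "laurent_of_poly (p * q) = laurent_of_poly p * laurent_of_poly q"
  by (simp add: laurent_of_poly_def fps_of_poly_mult fls_times_fps_to_fls)

lemma laurent_of_poly_monom: "laurent_of_poly (monom 1 k) = fls_X ^ k"
  by (simp add: laurent_of_poly_def fps_of_poly_monom' fps_to_fls_power)

lemma laurent_of_poly_of_int: "laurent_of_poly [:of_int m:] = of_int m"
  by (simp add: laurent_of_poly_def fps_of_poly_const fps_of_int)

lemma fls_nth_laurent_of_poly_times_X_inv_power:
  "fls_nth (laurent_of_poly f * fls_X_inv ^ k) j = (if j + int k < 0 then 0 else coeff f (nat (j + int k)))"
  by (simp add: laurent_of_poly_def fls_X_inv_power_times_conv_shift)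

lemma zero_in_H_ring: "0 \<in> H_ring"
  using numerical_polys_of_int[of 0] laurent_of_poly_of_int[of 0] unfolding H_ring_def
  by (intro CollectI exI[of _ "[:0:]"] exI[of _ 0]) simp

lemma H_ring_diff_scale:
  assumes "x \<in> H_ring" "y \<in> H_ring"
  shows "x - of_int m * y \<in> H_ring"
proof -
  obtain f k where x: "x = laurent_of_poly f * fls_X_inv ^ k" and f: "f \<in> numerical_polys"
    using assms(1) by (auto simp: H_ring_def)
  obtain g l where y: "y = laurent_of_poly g * fls_X_inv ^ l" and g: "g \<in> numerical_polys"
    using assms(2) by (auto simp: H_ring_def)
  define p where "p = f * monom 1 l - [:of_int m:] * g * monom 1 k"
  have "p \<in> numerical_polys"
    unfolding p_def using f g
    by (intro numerical_polys_diff numerical_polys_mult numerical_polys_of_int numerical_polys_monom)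
  moreover have "x - of_int m * y = laurent_of_poly p * fls_X_inv ^ (k + l)"
  proof -
    have X: "(fls_X::rat fls) ^ n * fls_X_inv ^ n = 1" for n
      by (simp add: fls_X_inv_power_times_conv_shift fls_X_power_conv_shift_1)
    have "laurent_of_poly p * fls_X_inv ^ (k + l)
        = laurent_of_poly f * fls_X_inv ^ k * (fls_X ^ l * fls_X_inv ^ l)
          - of_int m * (laurent_of_poly g * fls_X_inv ^ l) * (fls_X ^ k * fls_X_inv ^ k)"
      unfolding p_def laurent_of_poly_diff laurent_of_poly_mult laurent_of_poly_monom laurent_of_poly_of_int
      by (simp add: power_add algebra_simps)
    then show ?thesis by (simp add: X x y)
  qed
  ultimately show ?thesis unfolding H_ring_def by blast
qed

lemma H_ring_finite_support:
  assumes "h \<in> H_ring"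
  shows "finite {j. fls_nth h j \<noteq> 0}"
proof -
  obtain f k where h: "h = laurent_of_poly f * fls_X_inv ^ k"
    using assms by (auto simp: H_ring_def)
  have "{j. fls_nth h j \<noteq> 0} \<subseteq> {- int k .. int (degree f) - int k}"
    by (auto simp: h fls_nth_laurent_of_poly_times_X_inv_power split: if_splits dest!: le_degree)
  then show ?thesis by (rule finite_subset) simp
qed

section \<open>Bounded denominators of coefficients\<close>

text \<open>\<open>Ints_loc b\<close> is the ring \<open>\<int>[1/b]\<close>.\<close>
definition Ints_loc :: "int \<Rightarrow> rat set" where
  "Ints_loc b = {x. \<exists>m. x * of_int b ^ m \<in> \<int>}"

lemma Ints_loc_Ints: "x \<in> \<int> \<Longrightarrow> x \<in> Ints_loc b"
  unfolding Ints_loc_def by (intro CollectI exI[of _ 0]) simp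

lemma Ints_loc_add:
  assumes "x \<in> Ints_loc b" "y \<in> Ints_loc b"
  shows "x + y \<in> Ints_loc b"
proof -
  obtain m n where m: "x * of_int b ^ m \<in> \<int>" and n: "y * of_int b ^ n \<in> \<int>"
    using assms by (auto simp: Ints_loc_def)
  have pow: "(of_int b :: rat) ^ k \<in> \<int>" for k by simp
  have "(x * of_int b ^ m) * of_int b ^ n + (y * of_int b ^ n) * of_int b ^ m \<in> \<int>"
    using Ints_add[OF Ints_mult[OF m pow] Ints_mult[OF n pow]] .
  then have "(x + y) * of_int b ^ (m + n) \<in> \<int>"
    by (simp add: power_add algebra_simps)
  then show ?thesis unfolding Ints_loc_def by blast
qed

lemma Ints_loc_mult:
  assumes "x \<in> Ints_loc b" "y \<in> Ints_loc b"
  shows "x * y \<in> Ints_loc b"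
proof -
  obtain m n where "x * of_int b ^ m \<in> \<int>" "y * of_int b ^ n \<in> \<int>"
    using assms by (auto simp: Ints_loc_def)
  then have "(x * of_int b ^ m) * (y * of_int b ^ n) \<in> \<int>" by (rule Ints_mult)
  then have "(x * y) * of_int b ^ (m + n) \<in> \<int>"
    by (simp add: power_add algebra_simps)
  then show ?thesis unfolding Ints_loc_def by blast
qed

lemma Ints_loc_sum: "(\<And>a. a \<in> A \<Longrightarrow> f a \<in> Ints_loc b) \<Longrightarrow> sum f A \<in> Ints_loc b"
  by (induction A rule: infinite_finite_induct) (auto intro: Ints_loc_add Ints_loc_Ints)

lemma Ints_loc_power_int:
  assumes "b \<noteq> 0"
  shows "(of_int b :: rat) powi z \<in> Ints_loc b"
proof (cases "z \<ge> 0")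
  case True
  then have "(of_int b :: rat) powi z = of_int (b ^ nat z)" by (simp add: power_int_nonneg_exp)
  then show ?thesis by (simp add: Ints_loc_Ints)
next
  case False
  then have "(of_int b :: rat) powi z * of_int b ^ nat (- z) = 1"
    using assms by (simp add: power_int_def power_mult_distrib[symmetric])
  then show ?thesis unfolding Ints_loc_def by (intro CollectI exI[of _ "nat (- z)"]) simp
qed

lemma Ints_loc_divide_power:
  assumes "x \<in> \<int>"
  shows "x / of_int b ^ n \<in> Ints_loc b"
proof (cases "b = 0")
  case True
  then show ?thesis using assms by (cases n) (auto simp: Ints_loc_Ints)
next
  case False
  then have "x / of_int b ^ n * of_int b ^ n = x" by simp
  then show ?thesis using assms unfolding Ints_loc_def by (intro CollectI exI[of _ n]) simp
qed

lemma Ints_loc_coprime_Ints: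
  assumes "coprime a b" "x \<in> Ints_loc a" "x \<in> Ints_loc b"
  shows "x \<in> \<int>"
proof -
  obtain m n where m: "x * of_int a ^ m \<in> \<int>" and n: "x * of_int b ^ n \<in> \<int>"
    using assms(2,3) by (auto simp: Ints_loc_def)
  obtain u v where "u * a ^ m + v * b ^ n = gcd (a ^ m) (b ^ n)"
    using bezout_int by blast
  then have uv: "u * a ^ m + v * b ^ n = 1" using assms(1) by simp
  have "x = of_int u * (x * of_int a ^ m) + of_int v * (x * of_int b ^ n)"
    using arg_cong[OF uv, of "\<lambda>k. x * of_int k"] by (simp add: algebra_simps)
  also have "\<dots> \<in> \<int>" using Ints_add[OF Ints_mult[OF Ints_of_int m] Ints_mult[OF Ints_of_int n]] .
  finally show ?thesis .
qed

lemma coeff_mult_Ints_loc: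
  assumes "\<And>i. coeff p i \<in> Ints_loc b" "\<And>i. coeff q i \<in> Ints_loc b"
  shows "coeff (p * q) i \<in> Ints_loc b"
  unfolding coeff_mult using assms by (intro Ints_loc_sum Ints_loc_mult)

lemma coeff_prod_linear_Ints_loc:
  assumes "b \<noteq> 0"
  shows "coeff (\<Prod>r\<in>S. [:- ((of_int b :: rat) powi r), 1:]) i \<in> Ints_loc b"
proof (induction S arbitrary: i rule: infinite_finite_induct)
  case (insert r S)
  have "coeff [:- ((of_int b :: rat) powi r), 1:] i \<in> Ints_loc b" for i
    using Ints_loc_mult[OF Ints_loc_Ints[of "-1"] Ints_loc_power_int[OF assms, of r]]
    by (cases i) (auto simp: coeff_pCons Ints_loc_Ints split: nat.split)
  moreover have "(\<Prod>r\<in>insert r S. [:- ((of_int b :: rat) powi r), 1:])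
      = [:- (of_int b powi r), 1:] * (\<Prod>r\<in>S. [:- (of_int b powi r), 1:])"
    using insert.hyps by (rule prod.insert)
  ultimately show ?case using insert.IH by (simp only: coeff_mult_Ints_loc)
qed (auto simp: Ints_loc_Ints coeff_1)

lemma combination_of_values_isolates_coeff:
  fixes c :: "int \<Rightarrow> 'a::field" and x :: 'a
  assumes J: "finite J" "e \<in> J" and x: "x \<noteq> 0"
  defines "Q \<equiv> \<Prod>r\<in>J-{e}. [:- (x powi r), 1:]"
  shows "(\<Sum>i\<le>degree Q. coeff Q i * (\<Sum>j\<in>J. c j * (x ^ (s + i)) powi j))
       = c e * (x powi e) ^ s * (\<Prod>r\<in>J-{e}. x powi e - x powi r)"
proof -
  have pow: "(x ^ (s + i)) powi j = (x powi j) ^ s * (x powi j) ^ i" for i j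
    using x by (simp add: power_int_power' power_int_power power_int_add[symmetric] algebra_simps)
  have "(\<Sum>i\<le>degree Q. coeff Q i * (\<Sum>j\<in>J. c j * (x ^ (s + i)) powi j))
      = (\<Sum>i\<le>degree Q. \<Sum>j\<in>J. c j * (x powi j) ^ s * (coeff Q i * (x powi j) ^ i))"
    unfolding pow by (simp add: sum_distrib_left algebra_simps)
  also have "\<dots> = (\<Sum>j\<in>J. c j * (x powi j) ^ s * (\<Sum>i\<le>degree Q. coeff Q i * (x powi j) ^ i))"
    by (subst sum.swap) (simp add: sum_distrib_left)
  also have "\<dots> = (\<Sum>j\<in>J. c j * (x powi j) ^ s * poly Q (x powi j))"
    by (simp add: poly_altdef)
  also have "\<dots> = c e * (x powi e) ^ s * poly Q (x powi e)
      + (\<Sum>j\<in>J - {e}. c j * (x powi j) ^ s * poly Q (x powi j))"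
    using J by (rule sum.remove)
  also have "(\<Sum>j\<in>J - {e}. c j * (x powi j) ^ s * poly Q (x powi j)) = 0"
    using J(1) by (intro sum.neutral) (auto simp: Q_def poly_prod)
  finally show ?thesis by (simp add: Q_def poly_prod)
qed

lemma sum_fls_nth_power_int_eq_poly_divide:
  fixes f :: "rat poly" and k :: nat and x :: rat
  defines "c \<equiv> fls_nth (laurent_of_poly f * fls_X_inv ^ k)"
  assumes J: "finite J" "{j. c j \<noteq> 0} \<subseteq> J" and x: "x \<noteq> 0"
  shows "(\<Sum>j\<in>J. c j * x powi j) = poly f x / x ^ k"
proof -
  define I where "I = (\<lambda>i. int i - int k) ` {..degree f}"
  have supp_I: "{j. c j \<noteq> 0} \<subseteq> I"
  proof
    fix j assume "j \<in> {j. c j \<noteq> 0}"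
    then have "0 \<le> j + int k" "nat (j + int k) \<le> degree f"
      by (auto simp: c_def fls_nth_laurent_of_poly_times_X_inv_power split: if_splits intro: le_degree)
    then show "j \<in> I" unfolding I_def by (intro image_eqI[of _ _ "nat (j + int k)"]) auto
  qed
  have "poly f x / x ^ k = (\<Sum>i\<le>degree f. coeff f i * x powi (int i - int k))"
    using x by (simp add: poly_altdef sum_divide_distrib power_int_diff)
  also have "\<dots> = (\<Sum>j\<in>I. c j * x powi j)"
    unfolding I_def by (subst sum.reindex) (auto simp: inj_on_def c_def fls_nth_laurent_of_poly_times_X_inv_power)
  also have "\<dots> = (\<Sum>j\<in>I \<union> J. c j * x powi j)"
    by (rule sum.mono_neutral_left) (use J supp_I in \<open>auto simp: I_def\<close>)
  also have "\<dots> = (\<Sum>j\<in>J. c j * x powi j)"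
    by (rule sum.mono_neutral_right) (use J in \<open>auto simp: I_def\<close>)
  finally show ?thesis ..
qed

lemma coeff_times_prod_in_Ints_loc:
  fixes b :: int
  assumes b: "b \<ge> 2" and J: "finite J" "e \<in> J" and h: "h \<in> H_ring"
    and supp: "{j. fls_nth h j \<noteq> 0} \<subseteq> J"
  shows "fls_nth h e * (\<Prod>r\<in>J-{e}. (of_int b :: rat) powi e - of_int b powi r) \<in> Ints_loc b"
proof -
  let ?B = "of_int b :: rat"
  obtain f k where hfk: "h = laurent_of_poly f * fls_X_inv ^ k" and "f \<in> numerical_polys"
    using h by (auto simp: H_ring_def)
  then obtain N where N: "\<And>n::int. n \<ge> N \<Longrightarrow> poly f (of_int n) \<in> \<int>"
    by (auto simp: numerical_polys_def)
  define s where "s = nat N"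
  define Q where "Q = (\<Prod>r\<in>J-{e}. [:- (?B powi r), 1:])"
  have evaluation: "(\<Sum>j\<in>J. fls_nth h j * (?B ^ (s + i)) powi j) \<in> Ints_loc b" for i
  proof -
    have "int (s + i) < int (2 ^ (s + i))" by (simp only: of_nat_less_iff less_exp)
    also have "\<dots> = 2 ^ (s + i)" by simp
    also have "\<dots> \<le> b ^ (s + i)" using b by (intro power_mono) auto
    finally have "N \<le> b ^ (s + i)" unfolding s_def by linarith
    then have "poly f (of_int (b ^ (s + i))) / ?B ^ ((s + i) * k) \<in> Ints_loc b"
      by (intro Ints_loc_divide_power N)
    moreover have "(\<Sum>j\<in>J. fls_nth h j * (?B ^ (s + i)) powi j) = poly f (?B ^ (s + i)) / (?B ^ (s + i)) ^ k"
      unfolding hfk using J(1) supp b by (intro sum_fls_nth_power_int_eq_poly_divide) (auto simp: hfk)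
    ultimately show ?thesis by (simp add: power_mult)
  qed
  have "(\<Sum>i\<le>degree Q. coeff Q i * (\<Sum>j\<in>J. fls_nth h j * (?B ^ (s + i)) powi j)) \<in> Ints_loc b"
    using b unfolding Q_def by (intro Ints_loc_sum Ints_loc_mult coeff_prod_linear_Ints_loc evaluation) auto
  then have isolated: "fls_nth h e * (?B powi e) ^ s * (\<Prod>r\<in>J-{e}. ?B powi e - ?B powi r) \<in> Ints_loc b"
    using b unfolding Q_def by (subst (asm) combination_of_values_isolates_coeff[OF J]) auto
  have "(fls_nth h e * (?B powi e) ^ s * (\<Prod>r\<in>J-{e}. ?B powi e - ?B powi r)) * ?B powi (- e * s)
      \<in> Ints_loc b"
    using b by (intro Ints_loc_mult[OF isolated] Ints_loc_power_int) auto
  also have "(fls_nth h e * (?B powi e) ^ s * (\<Prod>r\<in>J-{e}. ?B powi e - ?B powi r)) * ?B powi (- e * s)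
      = fls_nth h e * (\<Prod>r\<in>J-{e}. ?B powi e - ?B powi r) * ((?B powi e) ^ s * ?B powi (- e * s))"
    by (simp only: mult_ac)
  also have "(?B powi e) ^ s * ?B powi (- e * s) = 1"
    using b by (simp add: power_int_power' power_int_add[symmetric])
  finally show ?thesis by simp
qed

lemma coeff_denominator_Ints_loc:
  fixes b :: int
  assumes b: "b \<ge> 2" and J: "finite J" "e \<in> J"
  shows "\<exists>D. D \<noteq> 0 \<and> (\<forall>h\<in>H_ring. {j. fls_nth h j \<noteq> 0} \<subseteq> J \<longrightarrow> of_int D * fls_nth h e \<in> Ints_loc b)"
proof -
  define K where "K = (\<Prod>r\<in>J-{e}. (of_int b :: rat) powi e - of_int b powi r)"
  obtain p q where pq: "quotient_of K = (p, q)" by fastforce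
  have "(of_int b :: rat) powi e \<noteq> of_int b powi r" if "r \<noteq> e" for r
    using that b power_int_strict_increasing[of e r "of_int b :: rat"]
      power_int_strict_increasing[of r e "of_int b :: rat"] by (cases "r < e") auto
  then have "K \<noteq> 0" using J(1) by (auto simp: K_def)
  then have "p \<noteq> 0" using quotient_of_div[OF pq] by auto
  moreover have "of_int p * fls_nth h e \<in> Ints_loc b"
    if "h \<in> H_ring" "{j. fls_nth h j \<noteq> 0} \<subseteq> J" for h
  proof -
    have "fls_nth h e * K * of_int q \<in> Ints_loc b"
      unfolding K_def using b J that by (intro Ints_loc_mult Ints_loc_Ints coeff_times_prod_in_Ints_loc) auto
    moreover have "fls_nth h e * K * of_int q = of_int p * fls_nth h e"
      using quotient_of_div[OF pq] quotient_of_denom_pos[OF pq] by simp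
    ultimately show ?thesis by simp
  qed
  ultimately show ?thesis by blast
qed

lemma H_ring_coeff_bounded_denominator:
  assumes "finite J" "e \<in> J"
  shows "\<exists>D. D \<noteq> 0 \<and> (\<forall>h\<in>H_ring. {j. fls_nth h j \<noteq> 0} \<subseteq> J \<longrightarrow> of_int D * fls_nth h e \<in> \<int>)"
proof -
  obtain D2 where D2: "D2 \<noteq> 0" "\<forall>h\<in>H_ring. {j. fls_nth h j \<noteq> 0} \<subseteq> J \<longrightarrow> of_int D2 * fls_nth h e \<in> Ints_loc 2"
    using coeff_denominator_Ints_loc[OF _ assms, of 2] by auto
  obtain D3 where D3: "D3 \<noteq> 0" "\<forall>h\<in>H_ring. {j. fls_nth h j \<noteq> 0} \<subseteq> J \<longrightarrow> of_int D3 * fls_nth h e \<in> Ints_loc 3"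
    using coeff_denominator_Ints_loc[OF _ assms, of 3] by auto
  have "of_int (D2 * D3) * fls_nth h e \<in> \<int>" if "h \<in> H_ring" "{j. fls_nth h j \<noteq> 0} \<subseteq> J" for h
  proof (rule Ints_loc_coprime_Ints[of 2 3])
    show "of_int (D2 * D3) * fls_nth h e \<in> Ints_loc 2"
      using Ints_loc_mult[OF Ints_loc_Ints[of "of_int D3"] D2(2)[rule_format, OF that]] by (simp add: ac_simps)
    show "of_int (D2 * D3) * fls_nth h e \<in> Ints_loc 3"
      using Ints_loc_mult[OF Ints_loc_Ints[of "of_int D2"] D3(2)[rule_format, OF that]] by (simp add: ac_simps)
  qed simp
  then show ?thesis using D2(1) D3(1) by (intro exI[of _ "D2 * D3"]) auto
qed

lemma support_subset_int_decode_atMost: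
  assumes "\<forall>m>n. fls_nth h (int_decode m) = 0"
  shows "{j. fls_nth h j \<noteq> 0} \<subseteq> int_decode ` {..n}"
proof
  fix j assume "j \<in> {j. fls_nth h j \<noteq> 0}"
  then have "\<not> n < int_encode j" using assms by auto
  then show "j \<in> int_decode ` {..n}" by (intro image_eqI[of _ _ "int_encode j"]) auto
qed

lemma H_ring_coeff_int_decode_eventually_zero:
  assumes "h \<in> H_ring"
  shows "\<exists>n. \<forall>m>n. fls_nth h (int_decode m) = 0"
proof -
  define n where "n = Max (int_encode ` {j. fls_nth h j \<noteq> 0})"
  have "int_encode j \<le> n" if "fls_nth h j \<noteq> 0" for j
    using H_ring_finite_support[OF assms] that by (auto simp: n_def)
  then have "fls_nth h (int_decode m) = 0" if "m > n" for m
    using that by (metis int_decode_inverse not_le)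
  then show ?thesis by blast
qed

theorem theorem1p4:
  shows "free_abelian H_ring"
proof -
  interpret triangular_coordinates H_ring "\<lambda>n h. fls_nth h (int_decode n)"
  proof
    fix h :: "rat fls" assume "\<forall>m. fls_nth h (int_decode m) = 0"
    then show "h = 0" by (intro fls_eqI) (metis fls_zero_nth int_encode_inverse)
  next
    fix n
    obtain D where "D \<noteq> 0" and D: "\<forall>h\<in>H_ring. {j. fls_nth h j \<noteq> 0} \<subseteq> int_decode ` {..n}
        \<longrightarrow> of_int D * fls_nth h (int_decode n) \<in> \<int>"
      using H_ring_coeff_bounded_denominator[of "int_decode ` {..n}" "int_decode n"] by auto
    then show "\<exists>D. D \<noteq> 0 \<and> (\<forall>h\<in>H_ring. (\<forall>m>n. fls_nth h (int_decode m) = 0)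
            \<longrightarrow> of_int D * fls_nth h (int_decode n) \<in> \<int>)"
      using support_subset_int_decode_atMost by blast
  qed (rule zero_in_H_ring H_ring_diff_scale H_ring_coeff_int_decode_eventually_zero
        | assumption | simp add: fls_of_int)+
  show ?thesis by (rule free_abelian)
qed

end
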